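(* Define integers $M(k;r)$ for $k,r\geq 1$ by $M(k;1)=k$, $M(1;r)=1$, $M(2;r)=r+1$, and for $k\geq 3$, $r\geq 2$, $$M(k;r)=M(k-1;r)+\Delta^{M(k-1;r)}(k-1;r)+M(k;r-1)-1.$$ Then this recursion is well defined (in particular $M(k-1;r)\ge AW(k-1;r)$ whenever $\Delta^{M(k-1;r)}(k-1;r)$ is used), and $AW(k;r)\le M(k;r)$ for all $k,r\geq 1$.
   Context: A sequence of positive integers $w_1<w_2<\dots<w_n$ is an ascending wave if $w_{i+1}-w_i \geq w_i-w_{i-1}$ for $2\le i\le n-1$. For positive integers $k,r$, $AW(k;r)$ denotes the least positive integer $N$ such that every $r$-coloring of $\{1,\dots,N\}$ contains a $k$-term monochromatic ascending wave. For $k\ge 2$ and $M\ge AW(k;r)$: let $\Psi^M(k;r)$ be the set of all $r$-colorings of $\{1,\dots,M\}$; for $\psi\in\Psi^M(k;r)$ let $\chi_k(\psi)$ be the set of monochromatic $k$-term ascending waves under $\psi$; for $w=(w_1,\dots,w_k)\in\chi_k(\psi)$ let $d_{k-1}(w)=w_k-w_{k-1}$; let $\delta_k(\psi)=\min\{d_{k-1}(w): w\in\chi_k(\psi)\}$; and let $\Delta^M(k;r)=\max\{\delta_k(\psi):\psi\in\Psi^M(k;r)\}$. *)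

theory Defs
  imports Main "HOL-Library.FuncSet"
begin

definition ascending_wave :: "nat list \<Rightarrow> bool" where
  "ascending_wave w \<longleftrightarrow>
     (\<forall>x\<in>set w. 0 < x) \<and> sorted_wrt (<) w \<and>
     (\<forall>i. 1 \<le> i \<and> i + 1 < length w \<longrightarrow> w!i - w!(i-1) \<le> w!(i+1) - w!i)"

definition colorings :: "nat \<Rightarrow> nat \<Rightarrow> (nat \<Rightarrow> nat) set" where
  "colorings N r = ({1..N} \<rightarrow>\<^sub>E {..<r})"

definition mono_waves :: "nat \<Rightarrow> nat \<Rightarrow> (nat \<Rightarrow> nat) \<Rightarrow> nat list set" where
  "mono_waves N k c = {w. length w = k \<and> ascending_wave w \<and> set w \<subseteq> {1..N} \<and>
                          (\<forall>x\<in>set w. \<forall>y\<in>set w. c x = c y)}"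

definition wave_property :: "nat \<Rightarrow> nat \<Rightarrow> nat \<Rightarrow> bool" where
  "wave_property k r N \<longleftrightarrow> (\<forall>c\<in>colorings N r. mono_waves N k c \<noteq> {})"

definition AW :: "nat \<Rightarrow> nat \<Rightarrow> nat" where
  "AW k r = (LEAST N. 0 < N \<and> wave_property k r N)"

definition last_gap :: "nat list \<Rightarrow> nat" where
  "last_gap w = w!(length w - 1) - w!(length w - 2)"

definition delta :: "nat \<Rightarrow> nat \<Rightarrow> (nat \<Rightarrow> nat) \<Rightarrow> nat" where
  "delta N k c = Min (last_gap ` mono_waves N k c)"

definition Delta :: "nat \<Rightarrow> nat \<Rightarrow> nat \<Rightarrow> nat" where
  "Delta N k r = Max ((\<lambda>c. delta N k c) ` colorings N r)"

fun M :: "nat \<Rightarrow> nat \<Rightarrow> nat" where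
  "M k r =
    (if k = 0 \<or> r = 0 then 0
     else if r = 1 then k
     else if k = 1 then 1
     else if k = 2 then r + 1
     else M (k-1) r + Delta (M (k-1) r) (k-1) r + M k (r-1) - 1)"

end

theory Submission
  imports Defs
begin

text \<open>In an r-colouring of {1..M(k;r)}, the initial segment
  {1..M(k-1;r)} contains a monochromatic (k-1)-term wave whose last gap d is at most
  Delta^{M(k-1;r)}(k-1;r); let L be its last term. Either some x \<ge> L + d has the colour
  of the wave, and appending x gives a k-term wave, or the M(k;r-1) integers following
  L + d - 1, which still lie in {1..M(k;r)}, avoid that colour and so contain a
  monochromatic k-term wave by induction on r.\<close>

lemma finite_mono_waves: "finite (mono_waves N k c)"
proof -
  have "mono_waves N k c \<subseteq> {w. set w \<subseteq> {1..N} \<and> length w = k}"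
    unfolding mono_waves_def by auto
  then show ?thesis
    using finite_lists_length_eq[of "{1..N}" k] by (blast intro: finite_subset)
qed

lemma finite_colorings: "finite (colorings N r)"
  unfolding colorings_def by (intro finite_PiE) auto

lemma mono_waves_mono: "N \<le> N' \<Longrightarrow> mono_waves N k c \<subseteq> mono_waves N' k c"
  unfolding mono_waves_def by auto

lemma mono_waves_restrict: "mono_waves N k (restrict c {1..N}) = mono_waves N k c"
  unfolding mono_waves_def by (auto 4 4)

lemma ascending_wave_shift: "ascending_wave w \<Longrightarrow> ascending_wave (map (\<lambda>x. x + s) w)"
  unfolding ascending_wave_def by (auto simp: sorted_wrt_map)

lemma sorted_wrt_less_le_last:
  fixes w :: "'a::order list"
  shows "sorted_wrt (<) w \<Longrightarrow> y \<in> set w \<Longrightarrow> y \<le> last w"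
proof (induction w)
  case (Cons a w)
  then show ?case
    using last_in_set[of w] by (cases "w = []") (auto intro: less_imp_le)
qed simp

lemma ascending_wave_snoc:
  assumes w: "ascending_wave w" and len: "2 \<le> length w"
    and x: "last w + last_gap w \<le> x"
  shows "ascending_wave (w @ [x])"
proof -
  let ?n = "length w"
  have sorted: "sorted_wrt (<) w"
    using w unfolding ascending_wave_def by blast
  have last: "last w = w ! (?n - 1)"
    using len by (intro last_conv_nth) auto
  have "w ! (?n - 2) < w ! (?n - 1)"
    using sorted len by (simp add: sorted_wrt_iff_nth_less)
  then have "last w < x"
    using x unfolding last_gap_def last by simp
  then have "sorted_wrt (<) (w @ [x])"
    using sorted sorted_wrt_less_le_last[OF sorted] by (fastforce simp: sorted_wrt_append)
  moreover have "(w @ [x]) ! i - (w @ [x]) ! (i - 1) \<le> (w @ [x]) ! (i + 1) - (w @ [x]) ! i"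
    if "1 \<le> i" "i + 1 < ?n + 1" for i
  proof (cases "i + 1 < ?n")
    case True
    then show ?thesis
      using w that unfolding ascending_wave_def by (simp add: nth_append)
  next
    case False
    then have "i - 1 = ?n - 2" "i = ?n - 1" "i + 1 = ?n"
      using that by linarith+
    then have "(w @ [x]) ! (i - 1) = w ! (?n - 2)" "(w @ [x]) ! i = last w"
      "(w @ [x]) ! (i + 1) = x"
      using len by (auto simp: nth_append last)
    then show ?thesis
      using x unfolding last_gap_def last by linarith
  qed
  ultimately show ?thesis
    using w \<open>last w < x\<close> unfolding ascending_wave_def by auto
qed

lemma wave_property_pos: "wave_property k r N \<Longrightarrow> 1 \<le> k \<Longrightarrow> 0 < N"
proof (rule ccontr)
  assume wp: "wave_property k r N" and k: "1 \<le> k" and "\<not> 0 < N"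
  then have "(\<lambda>_. undefined) \<in> colorings N r"
    unfolding colorings_def by simp
  then obtain w where "w \<in> mono_waves N k (\<lambda>_. undefined)"
    using wp unfolding wave_property_def by blast
  then show False
    using k \<open>\<not> 0 < N\<close> unfolding mono_waves_def by auto
qed

lemma AW_le: "wave_property k r N \<Longrightarrow> 1 \<le> k \<Longrightarrow> AW k r \<le> N"
  unfolding AW_def by (intro Least_le) (simp add: wave_property_pos)

lemma wave_property_one_colour: "wave_property k 1 k"
  unfolding wave_property_def
proof
  fix c assume "c \<in> colorings k 1"
  then have "c x = 0" if "x \<in> {1..k}" for x
    using that unfolding colorings_def by auto
  moreover have "ascending_wave [1..<k+1]"
    unfolding ascending_wave_def by (auto simp: sorted_wrt_iff_nth_less simp del: upt_Suc)
  ultimately have "[1..<k+1] \<in> mono_waves k k c"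
    unfolding mono_waves_def by auto
  then show "mono_waves k k c \<noteq> {}" by blast
qed

lemma wave_property_one_term: "wave_property 1 r 1"
proof -
  have "[1] \<in> mono_waves 1 1 c" for c
    unfolding mono_waves_def ascending_wave_def by auto
  then show ?thesis
    unfolding wave_property_def by blast
qed

lemma wave_property_two_terms: "wave_property 2 r (r + 1)"
  unfolding wave_property_def
proof
  fix c assume c: "c \<in> colorings (r + 1) r"
  have "\<not> inj_on c {1..r+1}"
  proof
    assume "inj_on c {1..r+1}"
    moreover have "c ` {1..r+1} \<subseteq> {..<r}"
      using c unfolding colorings_def by auto
    ultimately have "card {1..r+1} \<le> card {..<r}"
      by (intro card_inj_on_le) auto
    then show False by simp
  qed
  then obtain x y where "x < y" "x \<in> {1..r+1}" "y \<in> {1..r+1}" "c x = c y"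
    unfolding inj_on_def by (metis linorder_neqE_nat)
  then have "[x, y] \<in> mono_waves (r + 1) 2 c"
    unfolding mono_waves_def ascending_wave_def by auto
  then show "mono_waves (r + 1) 2 c \<noteq> {}" by blast
qed

lemma wave_property_shifted:
  assumes wp: "wave_property k r N" and A: "finite A" "card A \<le> r"
    and c: "\<forall>x\<in>{s<..s+N}. c x \<in> A"
  shows "mono_waves (s + N) k c \<noteq> {}"
proof -
  obtain g where g: "g ` A \<subseteq> {..<r}" "inj_on g A"
    using card_le_inj[OF A(1) finite_lessThan, of r] A(2) by auto
  have cA: "c (y + s) \<in> A" if "y \<in> {1..N}" for y
    using c that by auto
  have gc: "g (c (y + s)) < r" if "y \<in> {1..N}" for y
    using g cA[OF that] by blast
  define c' where "c' = restrict (\<lambda>y. g (c (y + s))) {1..N}"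
  have "c' \<in> colorings N r"
    using gc unfolding c'_def colorings_def by (simp add: restrict_PiE_iff)
  then obtain w where "w \<in> mono_waves N k c'"
    using wp unfolding wave_property_def by blast
  then have len: "length w = k" and wave: "ascending_wave w" and set: "set w \<subseteq> {1..N}"
    and mono: "\<forall>x\<in>set w. \<forall>y\<in>set w. c' x = c' y"
    unfolding mono_waves_def by blast+
  have "c (x + s) = c (y + s)" if "x \<in> set w" "y \<in> set w" for x y
  proof -
    have xy: "x \<in> {1..N}" "y \<in> {1..N}"
      using set that by auto
    have "c' x = c' y"
      using mono that by blast
    then have "g (c (x + s)) = g (c (y + s))"
      using xy unfolding c'_def by simp
    then show ?thesis
      by (rule inj_onD[OF g(2) _ cA[OF xy(1)] cA[OF xy(2)]])
  qed
  then have "\<forall>x\<in>set (map (\<lambda>x. x + s) w). \<forall>y\<in>set (map (\<lambda>x. x + s) w). c x = c y"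
    unfolding set_map by blast
  moreover have "set (map (\<lambda>x. x + s) w) \<subseteq> {1..s + N}"
    using set by auto
  ultimately have "map (\<lambda>x. x + s) w \<in> mono_waves (s + N) k c"
    using len ascending_wave_shift[OF wave] unfolding mono_waves_def mem_Collect_eq length_map
    by blast
  then show ?thesis by blast
qed

lemma mono_wave_last_gap_le_Delta:
  assumes wp: "wave_property k r N" and c: "c \<in> colorings N' r" and "N \<le> N'"
  obtains w where "w \<in> mono_waves N k c" "last_gap w \<le> Delta N k r"
proof -
  let ?c = "restrict c {1..N}"
  have col: "?c \<in> colorings N r"
    using c \<open>N \<le> N'\<close> unfolding colorings_def by auto
  then have "mono_waves N k c \<noteq> {}"
    using wp mono_waves_restrict unfolding wave_property_def by metis
  then have "delta N k ?c \<in> last_gap ` mono_waves N k c"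
    unfolding delta_def mono_waves_restrict by (intro Min_in finite_imageI finite_mono_waves) auto
  moreover have "delta N k ?c \<le> Delta N k r"
    unfolding Delta_def using col finite_colorings by (intro Max_ge) auto
  ultimately show thesis
    using that by auto
qed

lemma wave_property_step:
  assumes k: "3 \<le> k"
    and wp_shorter: "wave_property (k - 1) r N" and wp_fewer: "wave_property k (r - 1) N'"
  shows "wave_property k r (N + Delta N (k - 1) r + N' - 1)"
  unfolding wave_property_def
proof
  let ?M = "N + Delta N (k - 1) r + N' - 1"
  fix c assume c: "c \<in> colorings ?M r"
  have "0 < N'"
    using wave_property_pos[OF wp_fewer] k by simp
  then have "N \<le> ?M"
    by linarith
  then obtain w where w: "w \<in> mono_waves N (k - 1) c" and gap: "last_gap w \<le> Delta N (k - 1) r"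
    by (rule mono_wave_last_gap_le_Delta[OF wp_shorter c])
  then have len: "length w = k - 1" and set: "set w \<subseteq> {1..N}"
    and wave: "ascending_wave w" and mono: "\<forall>x\<in>set w. \<forall>y\<in>set w. c x = c y"
    unfolding mono_waves_def by blast+
  define L where "L = last w"
  have "L \<in> set w"
    unfolding L_def using len k by (intro last_in_set) auto
  then have L: "1 \<le> L" "L \<le> N"
    using set by auto
  have colour_L: "\<forall>x\<in>set w. c x = c L"
    using mono \<open>L \<in> set w\<close> by blast
  show "mono_waves ?M k c \<noteq> {}"
  proof (cases "\<exists>x\<in>{L + last_gap w..?M}. c x = c L")
    case True
    then obtain x where x: "L + last_gap w \<le> x" "x \<le> ?M" "c x = c L"
      by auto
    have "ascending_wave (w @ [x])"
      using ascending_wave_snoc[OF wave] len k x unfolding L_def by simp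
    moreover have "length (w @ [x]) = k"
      using len k by simp
    moreover have "set (w @ [x]) \<subseteq> {1..?M}"
      using set x L \<open>N \<le> ?M\<close> by auto
    moreover have "\<forall>a\<in>set (w @ [x]). c a = c L"
      using colour_L x(3) by simp
    ultimately have "w @ [x] \<in> mono_waves ?M k c"
      unfolding mono_waves_def mem_Collect_eq by metis
    then show ?thesis by blast
  next
    case False
    let ?s = "L + last_gap w - 1"
    have window: "\<forall>x\<in>{?s<..?s + N'}. c x \<in> {..<r} - {c L}"
    proof
      fix x assume "x \<in> {?s<..?s + N'}"
      then have x: "x \<in> {L + last_gap w..?M}" "x \<in> {1..?M}"
        using L gap by auto
      then show "c x \<in> {..<r} - {c L}"
        using False PiE_mem[OF c[unfolded colorings_def] x(2)] by auto
    qed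
    have "c L < r"
      using PiE_mem[OF c[unfolded colorings_def], of L] L \<open>N \<le> ?M\<close> by simp
    then have "card ({..<r} - {c L}) \<le> r - 1"
      by simp
    then have "mono_waves (?s + N') k c \<noteq> {}"
      using wave_property_shifted[OF wp_fewer _ _ window] by simp
    moreover have "?s + N' \<le> ?M"
      using L gap by linarith
    ultimately show ?thesis
      using mono_waves_mono by blast
  qed
qed

declare M.simps [simp del]

lemma wave_property_M: "1 \<le> k \<Longrightarrow> 1 \<le> r \<Longrightarrow> wave_property k r (M k r)"
proof (induction k r rule: M.induct)
  case (1 k r)
  consider "r = 1" | "r \<noteq> 1" "k = 1" | "r \<noteq> 1" "k = 2" | "3 \<le> k" "2 \<le> r"
    using "1.prems" by linarith
  then show ?case
  proof cases
    case 1
    then show ?thesis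
      using wave_property_one_colour by (subst M.simps) simp
  next
    case 2
    then show ?thesis
      using wave_property_one_term "1.prems" by (subst M.simps) simp
  next
    case 3
    then show ?thesis
      using wave_property_two_terms "1.prems" by (subst M.simps) simp
  next
    case 4
    then have "M k r = M (k - 1) r + Delta (M (k - 1) r) (k - 1) r + M k (r - 1) - 1"
      by (subst M.simps) simp
    moreover have "wave_property (k - 1) r (M (k - 1) r)" "wave_property k (r - 1) (M k (r - 1))"
      using "1.IH" 4 by simp_all
    ultimately show ?thesis
      using wave_property_step[OF \<open>3 \<le> k\<close>] by simp
  qed
qed

theorem lemma1p1:
  shows "(\<forall>k r. 3 \<le> k \<longrightarrow> 2 \<le> r \<longrightarrow>
            wave_property (k-1) r (M (k-1) r) \<and> AW (k-1) r \<le> M (k-1) r) \<and>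
         (\<forall>k r. 1 \<le> k \<longrightarrow> 1 \<le> r \<longrightarrow>
            wave_property k r (M k r) \<and> AW k r \<le> M k r)"
  using wave_property_M AW_le by simp

end
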